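(* Assume $\lambda_1,\lambda_2>0$ and $\lambda_1\lambda_2<1$, with $\delta_0,\delta_1,\delta_2>0$ fixed, and let $(\theta_1^*,\theta_2^* )$ be the unique fixed point in $(0,\infty)^2$ of $(\theta_1,\theta_2)\mapsto(\varphi_1(\theta_2),\varphi_2(\theta_1))$ and \[ p_1^*=\frac{\delta_0\theta_2^*}{\delta_0\theta_1^*+\delta_0\theta_2^*+2\theta_1^*\theta_2^*},\qquad p_2^*=\frac{\delta_0\theta_1^*}{\delta_0\theta_1^*+\delta_0\theta_2^*+2\theta_1^*\theta_2^*}. \] Then \[ \lim_{\lambda_1\lambda_2\nearrow1}\theta_1^*=\lim_{\lambda_1\lambda_2\nearrow1}\theta_2^*=0\quad\text{and}\quad\lim_{\lambda_1\lambda_2\nearrow1}(p_1^*+p_2^* )=1. \]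
   Context: $\delta_0>0$ is the insurer's absolute risk aversion, $\delta_1,\delta_2>0$ the reinsurers', and $\lambda_1,\lambda_2>0$ the competition degrees. For $i\ne j$ in $\{1,2\}$ and $x>0$, \[ \varphi_i(x)=\frac{(\delta_0+2\delta_i)x^2+(1+\lambda_j)\delta_0\delta_i\,x}{2x^2+\big((1+2\lambda_j)\delta_0+2\lambda_j\delta_i\big)x+\lambda_j(1+\lambda_j)\delta_0\delta_i}. \] In the paper's two-layer reinsurance game, $(\theta_1^*,\theta_2^* )$ are the equilibrium variance-premium loadings of the two reinsurers and $(p_1^*,p_2^* )$ the insurer's equilibrium proportions ceded to them. *)

theory Defs
  imports "HOL-Analysis.Analysis"
begin

text \<open>phi d0 di lj x is the paper's varphi_i(x), where d0 = delta_0, di = delta_i and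
  lj = lambda_j (j the other index).\<close>
definition phi :: "real \<Rightarrow> real \<Rightarrow> real \<Rightarrow> real \<Rightarrow> real" where
  "phi d0 di lj x =
     ((d0 + 2*di) * x^2 + (1 + lj) * d0 * di * x) /
     (2 * x^2 + ((1 + 2*lj) * d0 + 2*lj*di) * x + lj * (1 + lj) * d0 * di)"

definition theta_star :: "real \<Rightarrow> real \<Rightarrow> real \<Rightarrow> real \<Rightarrow> real \<Rightarrow> real \<times> real" where
  "theta_star d0 d1 d2 l1 l2 =
     (THE t. 0 < fst t \<and> 0 < snd t \<and>
             fst t = phi d0 d1 l2 (snd t) \<and> snd t = phi d0 d2 l1 (fst t))"

definition p1_star :: "real \<Rightarrow> real \<Rightarrow> real \<Rightarrow> real \<Rightarrow> real \<Rightarrow> real" where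
  "p1_star d0 d1 d2 l1 l2 =
     (let (t1, t2) = theta_star d0 d1 d2 l1 l2 in d0 * t2 / (d0 * t1 + d0 * t2 + 2 * t1 * t2))"

definition p2_star :: "real \<Rightarrow> real \<Rightarrow> real \<Rightarrow> real \<Rightarrow> real \<Rightarrow> real" where
  "p2_star d0 d1 d2 l1 l2 =
     (let (t1, t2) = theta_star d0 d1 d2 l1 l2 in d0 * t1 / (d0 * t1 + d0 * t2 + 2 * t1 * t2))"

text \<open>The limit lambda_1 lambda_2 increasing to 1, over pairs (lambda_1,lambda_2) with
  lambda_1, lambda_2 > 0 and lambda_1 lambda_2 < 1.\<close>
definition lam_filter :: "(real \<times> real) filter" where
  "lam_filter = inf (principal {l. 0 < fst l \<and> 0 < snd l})
                    (filtercomap (\<lambda>l. fst l * snd l) (at_left 1))"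

end

theory Submission
  imports Defs
begin

text \<open>Write \<open>\<phi>\<^sub>i(x) = x / (\<lambda>\<^sub>j + x \<kappa>\<^sub>i(x))\<close>, where \<open>\<kappa>\<^sub>i\<close> (\<open>phi_coeff\<close> below)
  is positive, decreasing and bounded below by \<open>2 / (\<delta>\<^sub>0 + 2\<delta>\<^sub>i)\<close>. A fixed point then satisfies \<open>\<theta>\<^sub>2 = A \<theta>\<^sub>1\<close> and
  \<open>\<theta>\<^sub>1 = B \<theta>\<^sub>2\<close> with \<open>A = \<lambda>\<^sub>2 + \<theta>\<^sub>2 \<kappa>\<^sub>1(\<theta>\<^sub>2)\<close> and \<open>B = \<lambda>\<^sub>1 + \<theta>\<^sub>1 \<kappa>\<^sub>2(\<theta>\<^sub>1)\<close>, hence \<open>A B = 1\<close>.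
  Along the curve \<open>\<theta>\<^sub>1 = \<phi>\<^sub>1(\<theta>\<^sub>2)\<close> the product \<open>A B\<close> is continuous and strictly increasing
  in \<open>\<theta>\<^sub>2\<close>, from \<open>\<lambda>\<^sub>1\<lambda>\<^sub>2 < 1\<close> to \<open>\<infinity>\<close>, which gives existence and uniqueness. Since \<open>B \<ge> \<lambda>\<^sub>1\<close>
  and \<open>A \<ge> \<lambda>\<^sub>2\<close>, the identity \<open>A B = 1\<close> forces
  \<open>1 - \<lambda>\<^sub>1\<lambda>\<^sub>2 \<ge> \<lambda>\<^sub>1 \<theta>\<^sub>2 \<kappa>\<^sub>1(\<theta>\<^sub>2) \<ge> \<lambda>\<^sub>1\<lambda>\<^sub>2 \<theta>\<^sub>1 \<cdot> 2 / (\<delta>\<^sub>0 + 2\<delta>\<^sub>1)\<close>, so both loadings are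
  \<open>O(1 - \<lambda>\<^sub>1\<lambda>\<^sub>2)\<close>. Finally \<open>p\<^sub>1\<^sup>* + p\<^sub>2\<^sup>* = 1 / (1 + 2\<theta>\<^sub>1\<theta>\<^sub>2 / (\<delta>\<^sub>0(\<theta>\<^sub>1 + \<theta>\<^sub>2)))\<close> and
  \<open>\<theta>\<^sub>1\<theta>\<^sub>2 / (\<theta>\<^sub>1 + \<theta>\<^sub>2) \<le> \<theta>\<^sub>2\<close>.\<close>

definition phi_coeff :: "real \<Rightarrow> real \<Rightarrow> real \<Rightarrow> real \<Rightarrow> real" where
  "phi_coeff d0 di lj x = (2*x + (1+lj)*d0) / ((d0 + 2*di)*x + (1+lj)*d0*di)"

lemma phi_coeff_denom_pos:
  assumes "0 < d0" "0 < di" "0 < lj" "0 \<le> (x::real)"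
  shows "0 < (d0 + 2*di)*x + (1+lj)*d0*di"
  using assms by (intro add_nonneg_pos mult_nonneg_nonneg mult_pos_pos) auto

lemma phi_coeff_ge:
  assumes "0 < d0" "0 < di" "0 < lj" "0 \<le> (x::real)"
  shows "2 / (d0 + 2*di) \<le> phi_coeff d0 di lj x"
proof -
  have "0 \<le> (1+lj)*d0*d0" using assms by simp
  then have "2 * ((d0 + 2*di)*x + (1+lj)*d0*di) \<le> (2*x + (1+lj)*d0) * (d0 + 2*di)"
    by (simp add: algebra_simps)
  then show ?thesis
    using phi_coeff_denom_pos[OF assms] assms by (simp add: phi_coeff_def divide_simps)
qed

lemma phi_coeff_pos:
  assumes "0 < d0" "0 < di" "0 < lj" "0 \<le> (x::real)"
  shows "0 < phi_coeff d0 di lj x"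
  by (rule less_le_trans[OF _ phi_coeff_ge[OF assms]]) (use assms in simp)

lemma mult_phi_coeff_ge:
  assumes "0 < d0" "0 < di" "0 < lj" "0 \<le> (x::real)"
  shows "2 / (d0 + 2*di) * x \<le> x * phi_coeff d0 di lj x"
  using mult_right_mono[OF phi_coeff_ge[OF assms] assms(4)] by (simp add: mult.commute)

lemma phi_coeff_antimono:
  assumes "0 < d0" "0 < di" "0 < lj" "0 \<le> (x::real)" "x \<le> y"
  shows "phi_coeff d0 di lj y \<le> phi_coeff d0 di lj x"
proof -
  have "(2*x + (1+lj)*d0) * ((d0 + 2*di)*y + (1+lj)*d0*di)
      - (2*y + (1+lj)*d0) * ((d0 + 2*di)*x + (1+lj)*d0*di) = (y - x) * ((1+lj)*d0*d0)"
    by (simp add: algebra_simps)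
  moreover have "0 \<le> (y - x) * ((1+lj)*d0*d0)" using assms by simp
  ultimately have "(2*y + (1+lj)*d0) * ((d0 + 2*di)*x + (1+lj)*d0*di)
      \<le> (2*x + (1+lj)*d0) * ((d0 + 2*di)*y + (1+lj)*d0*di)"
    by linarith
  then show ?thesis
    using phi_coeff_denom_pos[of d0 di lj x] phi_coeff_denom_pos[of d0 di lj y] assms
    by (simp add: phi_coeff_def divide_simps)
qed

lemma mult_phi_coeff_strict_mono:
  assumes "0 < d0" "0 < di" "0 < lj" "0 \<le> (x::real)" "x < y"
  shows "x * phi_coeff d0 di lj x < y * phi_coeff d0 di lj y"
proof -
  define a b c where "a = (1+lj)*d0" and "b = d0 + 2*di" and "c = (1+lj)*d0*di"
  have "0 < a" "0 < b" "0 < c" using assms by (simp_all add: a_def b_def c_def)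
  have "y*(2*y + a)*(b*x + c) - x*(2*x + a)*(b*y + c) = (y - x)*(2*b*x*y + 2*c*(x + y) + a*c)"
    by (simp add: algebra_simps)
  moreover have "0 < (y - x)*(2*b*x*y + 2*c*(x + y) + a*c)"
    using assms \<open>0 < a\<close> \<open>0 < b\<close> \<open>0 < c\<close> by (intro mult_pos_pos add_nonneg_pos) auto
  moreover have "0 < b*x + c" "0 < b*y + c"
    using assms \<open>0 < b\<close> \<open>0 < c\<close> by (simp_all add: add_nonneg_pos)
  ultimately have "x*(2*x + a)/(b*x + c) < y*(2*y + a)/(b*y + c)"
    by (simp add: divide_simps)
  then show ?thesis by (simp add: phi_coeff_def a_def b_def c_def)
qed

lemma continuous_on_phi_coeff:
  assumes "0 < d0" "0 < di" "0 < lj"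
  shows "continuous_on {0..} (phi_coeff d0 di lj)"
  unfolding phi_coeff_def[abs_def]
  using phi_coeff_denom_pos[OF assms] by (intro continuous_intros) force

lemma phi_eq_div:
  assumes "0 < d0" "0 < di" "0 < lj" "0 \<le> (x::real)"
  shows "phi d0 di lj x = x / (lj + x * phi_coeff d0 di lj x)"
proof -
  define a b c where "a = (1+lj)*d0" and "b = d0 + 2*di" and "c = (1+lj)*d0*di"
  have "0 < b*x + c" using phi_coeff_denom_pos[OF assms] by (simp add: b_def c_def)
  moreover have "0 < lj*(b*x + c) + x*(2*x + a)"
    using assms \<open>0 < b*x + c\<close> by (intro add_pos_nonneg) (auto simp: a_def)
  moreover have "phi d0 di lj x = x*(b*x + c) / (lj*(b*x + c) + x*(2*x + a))"
    by (simp add: phi_def a_def b_def c_def algebra_simps power2_eq_square)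
  ultimately show ?thesis by (simp add: phi_coeff_def a_def b_def c_def field_simps)
qed

lemma phi_pos:
  assumes "0 < d0" "0 < di" "0 < lj" "0 < (x::real)"
  shows "0 < phi d0 di lj x"
  using assms phi_eq_div[of d0 di lj x] phi_coeff_pos[of d0 di lj x]
  by (auto intro!: divide_pos_pos add_pos_nonneg)

lemma phi_nonneg:
  assumes "0 < d0" "0 < di" "0 < lj" "0 \<le> (x::real)"
  shows "0 \<le> phi d0 di lj x"
  using assms phi_eq_div[of d0 di lj x] phi_coeff_pos[of d0 di lj x]
  by (auto intro!: divide_nonneg_pos add_pos_nonneg)

lemma phi_strict_mono:
  assumes "0 < d0" "0 < di" "0 < lj" "0 < (x::real)" "x < y"
  shows "phi d0 di lj x < phi d0 di lj y"
proof -
  have inv: "phi d0 di lj z = 1 / (lj/z + phi_coeff d0 di lj z)" if "0 < z" for z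
    using phi_eq_div[of d0 di lj z] assms that by (simp add: field_simps)
  have "lj/y < lj/x" using assms by (simp add: divide_strict_left_mono)
  moreover have "phi_coeff d0 di lj y \<le> phi_coeff d0 di lj x"
    using assms by (intro phi_coeff_antimono) auto
  ultimately have "lj/y + phi_coeff d0 di lj y < lj/x + phi_coeff d0 di lj x"
    by linarith
  moreover have "0 < lj/y + phi_coeff d0 di lj y"
    using assms phi_coeff_pos[of d0 di lj y] by (intro add_pos_pos) auto
  ultimately show ?thesis
    using assms inv[of x] inv[of y] by (simp add: divide_strict_left_mono)
qed

lemma continuous_on_phi:
  assumes "0 < d0" "0 < di" "0 < lj"
  shows "continuous_on {0..} (phi d0 di lj)"
proof -
  have "continuous_on {0..} (\<lambda>x. x / (lj + x * phi_coeff d0 di lj x))"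
  proof (intro continuous_intros continuous_on_phi_coeff assms ballI)
    fix x :: real
    assume "x \<in> {0..}"
    then have "0 < lj + x * phi_coeff d0 di lj x"
      using assms phi_coeff_pos[of d0 di lj x] by (intro add_pos_nonneg) auto
    then show "lj + x * phi_coeff d0 di lj x \<noteq> 0" by simp
  qed
  moreover have "continuous_on {0..} (phi d0 di lj)
      \<longleftrightarrow> continuous_on {0..} (\<lambda>x. x / (lj + x * phi_coeff d0 di lj x))"
    using assms by (intro continuous_on_cong) (simp_all add: phi_eq_div)
  ultimately show ?thesis by simp
qed

definition equilibrium :: "real \<Rightarrow> real \<Rightarrow> real \<Rightarrow> real \<Rightarrow> real \<Rightarrow> real \<times> real \<Rightarrow> bool" where
  "equilibrium d0 d1 d2 l1 l2 t \<longleftrightarrow>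
     0 < fst t \<and> 0 < snd t \<and> fst t = phi d0 d1 l2 (snd t) \<and> snd t = phi d0 d2 l1 (fst t)"

lemma theta_star_eq_The: "theta_star d0 d1 d2 l1 l2 = (THE t. equilibrium d0 d1 d2 l1 l2 t)"
  by (simp add: theta_star_def equilibrium_def)

lemma equilibrium_swap:
  "equilibrium d0 d1 d2 l1 l2 (t1, t2) \<longleftrightarrow> equilibrium d0 d2 d1 l2 l1 (t2, t1)"
  by (auto simp: equilibrium_def)

lemma equilibrium_Pair:
  "equilibrium d0 d1 d2 l1 l2 (t1, t2) \<longleftrightarrow>
    0 < t1 \<and> 0 < t2 \<and> t1 = phi d0 d1 l2 t2 \<and> t2 = phi d0 d2 l1 t1"
  by (simp add: equilibrium_def)

lemma equilibrium_iff_product: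
  assumes d: "0 < d0" "0 < d1" "0 < d2" and l: "0 < l1" "0 < l2"
    and t: "0 < t1" "0 < t2"
  shows "equilibrium d0 d1 d2 l1 l2 (t1, t2) \<longleftrightarrow>
    t1 = phi d0 d1 l2 t2 \<and>
    (l2 + t2 * phi_coeff d0 d1 l2 t2) * (l1 + t1 * phi_coeff d0 d2 l1 t1) = 1"
proof -
  define A B where "A = l2 + t2 * phi_coeff d0 d1 l2 t2" and "B = l1 + t1 * phi_coeff d0 d2 l1 t1"
  have "0 < A" "0 < B"
    unfolding A_def B_def using d l t phi_coeff_pos[of d0 d1 l2 t2] phi_coeff_pos[of d0 d2 l1 t1]
    by (auto intro!: add_pos_nonneg)
  have phi_A: "phi d0 d1 l2 t2 = t2 / A" and phi_B: "phi d0 d2 l1 t1 = t1 / B"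
    using d l t by (simp_all add: A_def B_def phi_eq_div)
  have "equilibrium d0 d1 d2 l1 l2 (t1, t2) \<longleftrightarrow> t1 = t2 / A \<and> t2 = t1 / B"
    using t by (simp add: equilibrium_Pair phi_A phi_B)
  also have "\<dots> \<longleftrightarrow> t1 = t2 / A \<and> A * B = 1"
  proof (rule conj_cong[OF refl])
    assume "t1 = t2 / A"
    then have "t2 = t1 / B \<longleftrightarrow> t2 = t2 / (A * B)" by simp
    also have "\<dots> \<longleftrightarrow> A * B = 1" using \<open>0 < A\<close> \<open>0 < B\<close> t by (simp add: eq_divide_eq)
    finally show "t2 = t1 / B \<longleftrightarrow> A * B = 1" .
  qed
  finally show ?thesis by (simp add: phi_A A_def B_def)
qed

lemma equilibrium_not_less:
  assumes d: "0 < d0" "0 < d1" "0 < d2" and l: "0 < l1" "0 < l2"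
    and t: "equilibrium d0 d1 d2 l1 l2 (t1, t2)" and s: "equilibrium d0 d1 d2 l1 l2 (s1, s2)"
  shows "\<not> t2 < s2"
proof
  assume "t2 < s2"
  have "0 < t1" "0 < t2" "0 < s1" "0 < s2" "t1 = phi d0 d1 l2 t2" "s1 = phi d0 d1 l2 s2"
    using t s unfolding equilibrium_Pair by blast+
  then have "t1 < s1" using d l \<open>t2 < s2\<close> by (simp add: phi_strict_mono)
  have "l2 + t2 * phi_coeff d0 d1 l2 t2 < l2 + s2 * phi_coeff d0 d1 l2 s2"
    using d l \<open>0 < t2\<close> \<open>t2 < s2\<close> mult_phi_coeff_strict_mono[of d0 d1 l2 t2 s2] by simp
  moreover have "l1 + t1 * phi_coeff d0 d2 l1 t1 < l1 + s1 * phi_coeff d0 d2 l1 s1"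
    using d l \<open>0 < t1\<close> \<open>t1 < s1\<close> mult_phi_coeff_strict_mono[of d0 d2 l1 t1 s1] by simp
  moreover have "0 \<le> l2 + t2 * phi_coeff d0 d1 l2 t2" "0 \<le> l1 + t1 * phi_coeff d0 d2 l1 t1"
    using d l \<open>0 < t1\<close> \<open>0 < t2\<close> phi_coeff_pos[of d0 d1 l2 t2] phi_coeff_pos[of d0 d2 l1 t1]
    by simp_all
  ultimately have "(l2 + t2 * phi_coeff d0 d1 l2 t2) * (l1 + t1 * phi_coeff d0 d2 l1 t1)
      < (l2 + s2 * phi_coeff d0 d1 l2 s2) * (l1 + s1 * phi_coeff d0 d2 l1 s1)"
    by (intro mult_strict_mono')
  moreover note equilibrium_iff_product[OF d l]
  ultimately show False
    using t s \<open>0 < t1\<close> \<open>0 < t2\<close> \<open>0 < s1\<close> \<open>0 < s2\<close> by (metis less_irrefl)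
qed

lemma equilibrium_unique:
  assumes d: "0 < d0" "0 < d1" "0 < d2" and l: "0 < l1" "0 < l2"
    and t: "equilibrium d0 d1 d2 l1 l2 (t1, t2)" and s: "equilibrium d0 d1 d2 l1 l2 (s1, s2)"
  shows "(t1, t2) = (s1, s2)"
proof -
  have "t2 = s2" using equilibrium_not_less[OF d l t s] equilibrium_not_less[OF d l s t] by linarith
  moreover have "t1 = phi d0 d1 l2 t2" "s1 = phi d0 d1 l2 s2"
    using t s unfolding equilibrium_Pair by blast+
  ultimately show ?thesis by simp
qed

lemma equilibrium_exists:
  assumes d: "0 < d0" "0 < d1" "0 < d2" and l: "0 < l1" "0 < l2" "l1 * l2 < 1"
  shows "\<exists>t. equilibrium d0 d1 d2 l1 l2 t"
proof -
  define P where "P = phi d0 d1 l2"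
  define G where "G x = (l2 + x * phi_coeff d0 d1 l2 x) * (l1 + P x * phi_coeff d0 d2 l1 (P x))"
    for x
  define c where "c = 2 / (d0 + 2*d1)"
  define T where "T = 2 / (c * l1)"
  have "0 < c" "0 < T" using d l by (simp_all add: c_def T_def)
  have P_nonneg: "0 \<le> P x" if "0 \<le> x" for x using d l that by (simp add: P_def phi_nonneg)
  have "continuous_on {0..} P" using d l by (simp add: P_def continuous_on_phi)
  then have "continuous_on {0..} (\<lambda>x. phi_coeff d0 d2 l1 (P x))"
    using d l P_nonneg by (intro continuous_on_compose2[OF continuous_on_phi_coeff]) auto
  then have "continuous_on {0..} G"
    unfolding G_def using d l \<open>continuous_on {0..} P\<close>
    by (intro continuous_intros continuous_on_phi_coeff)
  then have "continuous_on {0..T} G" by (rule continuous_on_subset) auto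
  have "P 0 = 0" by (simp add: P_def phi_def)
  then have "G 0 < 1" using l by (simp add: G_def mult.commute)
  have "T * c \<le> l2 + T * phi_coeff d0 d1 l2 T"
    using d l \<open>0 < T\<close> mult_phi_coeff_ge[of d0 d1 l2 T] by (simp add: c_def mult.commute)
  moreover have "l1 \<le> l1 + P T * phi_coeff d0 d2 l1 (P T)"
    using d l \<open>0 < T\<close> P_nonneg[of T] phi_coeff_pos[of d0 d2 l1 "P T"] by simp
  ultimately have "T * c * l1 \<le> G T"
    unfolding G_def using d l \<open>0 < T\<close> phi_coeff_pos[of d0 d1 l2 T] by (intro mult_mono) auto
  moreover have "T * c * l1 = 2" using \<open>0 < c\<close> l by (simp add: T_def)
  ultimately have "1 \<le> G T" by simp
  then obtain x where x: "0 \<le> x" "x \<le> T" "G x = 1"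
    using IVT'[of G 0 1 T] \<open>G 0 < 1\<close> \<open>0 < T\<close> \<open>continuous_on {0..T} G\<close> by auto
  with \<open>G 0 < 1\<close> have "0 < x" by (cases "x = 0") auto
  then have "0 < P x" using d l by (simp add: P_def phi_pos)
  then have "equilibrium d0 d1 d2 l1 l2 (P x, x)"
    using equilibrium_iff_product[OF d l(1,2) \<open>0 < P x\<close> \<open>0 < x\<close>] x by (simp add: G_def P_def)
  then show ?thesis ..
qed

lemma equilibrium_theta_star:
  assumes d: "0 < d0" "0 < d1" "0 < d2" and l: "0 < l1" "0 < l2" "l1 * l2 < 1"
  shows "equilibrium d0 d1 d2 l1 l2 (theta_star d0 d1 d2 l1 l2)"
proof -
  have "\<exists>!t. equilibrium d0 d1 d2 l1 l2 t"
    using equilibrium_exists[OF d l] equilibrium_unique[OF d l(1,2)] by (metis prod.collapse)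
  then show ?thesis unfolding theta_star_eq_The by (rule theI')
qed

lemma equilibrium_fst_le:
  assumes d: "0 < d0" "0 < d1" "0 < d2" and l: "0 < l1" "0 < l2"
    and eq: "equilibrium d0 d1 d2 l1 l2 (t1, t2)"
  shows "t1 \<le> (d0 + 2*d1) / 2 * ((1 - l1*l2) / (l1*l2))"
proof -
  define c where "c = 2 / (d0 + 2*d1)"
  define A B where "A = l2 + t2 * phi_coeff d0 d1 l2 t2" and "B = l1 + t1 * phi_coeff d0 d2 l1 t1"
  have t: "0 < t1" "0 < t2" "t1 = phi d0 d1 l2 t2" using eq unfolding equilibrium_Pair by blast+
  have "A * B = 1" using eq equilibrium_iff_product[OF d l t(1,2)] unfolding A_def B_def by blast
  have "0 < c" using d by (simp add: c_def)
  have "c * t2 \<le> A - l2"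
    using d l t(2) mult_phi_coeff_ge[of d0 d1 l2 t2] by (simp add: A_def c_def)
  then have "l2 \<le> A" using mult_pos_pos[OF \<open>0 < c\<close> t(2)] by linarith
  have "t1 = t2 / A" using d l t(2,3) by (simp add: A_def phi_eq_div)
  then have "t2 = t1 * A" using l \<open>l2 \<le> A\<close> by simp
  have "l1 \<le> B" using d l t(1) phi_coeff_pos[of d0 d2 l1 t1] by (simp add: B_def)
  have "l1 * l2 * c * t1 \<le> l1 * (c * t2)"
    using l t \<open>0 < c\<close> \<open>l2 \<le> A\<close> unfolding \<open>t2 = t1 * A\<close> by (simp add: mult_left_mono)
  also have "\<dots> \<le> l1 * (A - l2)" using l \<open>c * t2 \<le> A - l2\<close> by simp
  also have "\<dots> \<le> A * B - l1 * l2"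
    using \<open>l1 \<le> B\<close> \<open>l2 \<le> A\<close> l by (simp add: algebra_simps mult_left_mono)
  finally have "l1 * l2 * c * t1 \<le> 1 - l1 * l2" using \<open>A * B = 1\<close> by simp
  then show ?thesis
    using d l \<open>0 < c\<close> by (simp add: c_def field_simps)
qed

lemma equilibrium_snd_le:
  assumes d: "0 < d0" "0 < d1" "0 < d2" and l: "0 < l1" "0 < l2"
    and eq: "equilibrium d0 d1 d2 l1 l2 (t1, t2)"
  shows "t2 \<le> (d0 + 2*d2) / 2 * ((1 - l1*l2) / (l1*l2))"
  using equilibrium_fst_le[of d0 d2 d1 l2 l1 t2 t1] assms
  by (simp add: equilibrium_swap mult.commute)

lemma theta_star_bounds:
  assumes d: "0 < d0" "0 < d1" "0 < d2" and l: "0 < l1" "0 < l2" "l1 * l2 < 1"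
  shows "0 < fst (theta_star d0 d1 d2 l1 l2) \<and>
      fst (theta_star d0 d1 d2 l1 l2) \<le> (d0 + 2*d1) / 2 * ((1 - l1*l2) / (l1*l2))"
    and "0 < snd (theta_star d0 d1 d2 l1 l2) \<and>
      snd (theta_star d0 d1 d2 l1 l2) \<le> (d0 + 2*d2) / 2 * ((1 - l1*l2) / (l1*l2))"
proof -
  obtain t1 t2 where t: "theta_star d0 d1 d2 l1 l2 = (t1, t2)" by fastforce
  then have eq: "equilibrium d0 d1 d2 l1 l2 (t1, t2)" using equilibrium_theta_star[OF d l] by simp
  then have "0 < t1" "0 < t2" unfolding equilibrium_Pair by blast+
  then show "0 < fst (theta_star d0 d1 d2 l1 l2) \<and>
      fst (theta_star d0 d1 d2 l1 l2) \<le> (d0 + 2*d1) / 2 * ((1 - l1*l2) / (l1*l2))"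
    and "0 < snd (theta_star d0 d1 d2 l1 l2) \<and>
      snd (theta_star d0 d1 d2 l1 l2) \<le> (d0 + 2*d2) / 2 * ((1 - l1*l2) / (l1*l2))"
    using equilibrium_fst_le[OF d l(1,2) eq] equilibrium_snd_le[OF d l(1,2) eq] by (simp_all add: t)
qed

lemma p1_star_plus_p2_star_bounds:
  assumes d: "0 < d0" "0 < d1" "0 < d2" and l: "0 < l1" "0 < l2" "l1 * l2 < 1"
  shows "1 - 2 * snd (theta_star d0 d1 d2 l1 l2) / d0
      \<le> p1_star d0 d1 d2 l1 l2 + p2_star d0 d1 d2 l1 l2"
    and "p1_star d0 d1 d2 l1 l2 + p2_star d0 d1 d2 l1 l2 \<le> 1"
proof -
  obtain t1 t2 where t: "theta_star d0 d1 d2 l1 l2 = (t1, t2)" by fastforce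
  define D where "D = d0 * t1 + d0 * t2 + 2 * t1 * t2"
  have "0 < t1" "0 < t2" using theta_star_bounds[OF d l] by (simp_all add: t)
  then have "0 < D" using d by (simp add: D_def add_pos_pos)
  have sum: "p1_star d0 d1 d2 l1 l2 + p2_star d0 d1 d2 l1 l2 = (d0 * t1 + d0 * t2) / D"
    by (simp add: p1_star_def p2_star_def t D_def add_divide_distrib)
  have "0 \<le> 2 * d0 * t2 * t2 + 4 * t1 * t2 * t2" using d \<open>0 < t1\<close> \<open>0 < t2\<close> by simp
  moreover have "(d0 - 2 * t2) * D
      = d0 * (d0 * t1 + d0 * t2) - (2 * d0 * t2 * t2 + 4 * t1 * t2 * t2)"
    by (simp add: D_def algebra_simps)
  ultimately have "(d0 - 2 * t2) * D \<le> d0 * (d0 * t1 + d0 * t2)" by linarith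
  then have "1 - 2 * t2 / d0 \<le> (d0 * t1 + d0 * t2) / D"
    using d \<open>0 < D\<close> by (simp add: field_simps)
  then show "1 - 2 * snd (theta_star d0 d1 d2 l1 l2) / d0
      \<le> p1_star d0 d1 d2 l1 l2 + p2_star d0 d1 d2 l1 l2"
    by (simp add: sum t)
  show "p1_star d0 d1 d2 l1 l2 + p2_star d0 d1 d2 l1 l2 \<le> 1"
    using \<open>0 < D\<close> \<open>0 < t1\<close> \<open>0 < t2\<close> by (simp add: sum D_def)
qed

lemma eventually_lam_filter: "\<forall>\<^sub>F l in lam_filter. 0 < fst l \<and> 0 < snd l \<and> fst l * snd l < 1"
proof -
  have "\<forall>\<^sub>F l in lam_filter. 0 < fst l \<and> 0 < snd l"
    unfolding lam_filter_def by (rule filter_leD[OF inf_le1]) (simp add: eventually_principal)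
  moreover have "\<forall>\<^sub>F l in lam_filter. fst l * snd l < (1::real)"
    unfolding lam_filter_def
    by (rule filter_leD[OF inf_le2], rule eventually_filtercomapI) (simp add: eventually_at_filter)
  ultimately show ?thesis by eventually_elim simp
qed

lemma tendsto_lam_filter_product: "((\<lambda>l. fst l * snd l) \<longlongrightarrow> 1) lam_filter"
proof -
  have "filterlim (\<lambda>l. fst l * snd l) (at_left (1::real)) lam_filter"
    unfolding lam_filter_def by (rule filterlim_mono[OF filterlim_filtercomap order.refl inf_le2])
  then show ?thesis by (simp add: filterlim_at)
qed

lemma lam_filter_squeeze_zero:
  fixes f :: "real \<times> real \<Rightarrow> real"
  assumes "\<And>l. 0 < fst l \<Longrightarrow> 0 < snd l \<Longrightarrow> fst l * snd l < 1 \<Longrightarrow>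
    0 \<le> f l \<and> f l \<le> C * ((1 - fst l * snd l) / (fst l * snd l))"
  shows "(f \<longlongrightarrow> 0) lam_filter"
proof (rule tendsto_sandwich[OF _ _ tendsto_const])
  show "\<forall>\<^sub>F l in lam_filter. 0 \<le> f l"
    and "\<forall>\<^sub>F l in lam_filter. f l \<le> C * ((1 - fst l * snd l) / (fst l * snd l))"
    using eventually_lam_filter by (auto elim!: eventually_mono dest: assms)
  have "((\<lambda>l. C * ((1 - fst l * snd l) / (fst l * snd l))) \<longlongrightarrow> C * ((1 - 1) / 1)) lam_filter"
    by (intro tendsto_intros tendsto_lam_filter_product) simp
  then show "((\<lambda>l. C * ((1 - fst l * snd l) / (fst l * snd l))) \<longlongrightarrow> 0) lam_filter" by simp
qed

theorem corollary3p5: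
  fixes d0 d1 d2 :: real
  assumes "0 < d0" and "0 < d1" and "0 < d2"
  shows "((\<lambda>l. fst (theta_star d0 d1 d2 (fst l) (snd l))) \<longlongrightarrow> 0) lam_filter \<and>
         ((\<lambda>l. snd (theta_star d0 d1 d2 (fst l) (snd l))) \<longlongrightarrow> 0) lam_filter \<and>
         ((\<lambda>l. p1_star d0 d1 d2 (fst l) (snd l) + p2_star d0 d1 d2 (fst l) (snd l))
           \<longlongrightarrow> 1) lam_filter"
proof (intro conjI)
  let ?t = "\<lambda>l. theta_star d0 d1 d2 (fst l) (snd l)"
  let ?p = "\<lambda>l. p1_star d0 d1 d2 (fst l) (snd l) + p2_star d0 d1 d2 (fst l) (snd l)"
  show "((\<lambda>l. fst (?t l)) \<longlongrightarrow> 0) lam_filter"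
    by (rule lam_filter_squeeze_zero[where C = "(d0 + 2*d1) / 2"])
      (use theta_star_bounds(1)[OF assms] in force)
  show snd_lim: "((\<lambda>l. snd (?t l)) \<longlongrightarrow> 0) lam_filter"
    by (rule lam_filter_squeeze_zero[where C = "(d0 + 2*d2) / 2"])
      (use theta_star_bounds(2)[OF assms] in force)
  have "\<forall>\<^sub>F l in lam_filter. 1 - 2 * snd (?t l) / d0 \<le> ?p l"
    using eventually_lam_filter
    by (rule eventually_mono) (simp add: p1_star_plus_p2_star_bounds(1)[OF assms])
  moreover have "\<forall>\<^sub>F l in lam_filter. ?p l \<le> 1"
    using eventually_lam_filter
    by (rule eventually_mono) (simp add: p1_star_plus_p2_star_bounds(2)[OF assms])
  moreover have "((\<lambda>l. 1 - 2 * snd (?t l) / d0) \<longlongrightarrow> 1 - 2 * 0 / d0) lam_filter"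
    by (intro tendsto_intros snd_lim) (use assms in simp)
  then have "((\<lambda>l. 1 - 2 * snd (?t l) / d0) \<longlongrightarrow> 1) lam_filter" by simp
  ultimately show "(?p \<longlongrightarrow> 1) lam_filter"
    by (rule tendsto_sandwich[OF _ _ _ tendsto_const])
qed

end
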